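(* Let $N$ be even and $M_N$ the set of perfect matchings of $\{1,\dots,N\}$, each identified with a fixed-point-free involution $\pi\in S_N$. For $\pi\in M_N$ and $i,j,k\in\{1,\dots,N\}$ define $T_{ijk}(\pi)\in M_N$ as follows: if $|\{i,j,k,\pi(i),\pi(j),\pi(k)\}|<6$ then $T_{ijk}(\pi)=\pi$; otherwise $T_{ijk}(\pi)$ is the perfect matching obtained from $\pi$ by removing the pairs $\{\pi(i),i\},\{j,\pi(j)\},\{k,\pi(k)\}$ and adding the pairs $\{i,j\},\{\pi(j),k\},\{\pi(k),\pi(i)\}$. Let $\pi$ be uniform over $M_N$, let $i\in\{1,\dots,N\}$ be fixed, and let $a,b$ be uniform over $\{1,\dots,N\}\setminus\{i\}$, with $\pi,a,b$ independent. Then $T_{iab}(\pi)$ is uniform over $M_N$, and $(T_{iab}(\pi))(i)=a$ provided that $|\{i,a,b,\pi(i),\pi(a),\pi(b)\}|=6$. *)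

theory Defs
  imports "HOL-Probability.Probability" "HOL-Combinatorics.Permutations"
begin

definition perfect_matchings :: "nat \<Rightarrow> (nat \<Rightarrow> nat) set" where
  "perfect_matchings N = {\<pi>. \<pi> permutes {1..N} \<and>
      (\<forall>x\<in>{1..N}. \<pi> (\<pi> x) = x \<and> \<pi> x \<noteq> x)}"

definition switch :: "nat \<Rightarrow> nat \<Rightarrow> nat \<Rightarrow> (nat \<Rightarrow> nat) \<Rightarrow> (nat \<Rightarrow> nat)" where
  "switch i j k \<pi> =
     (if card {i, j, k, \<pi> i, \<pi> j, \<pi> k} < 6 then \<pi>
      else \<pi>(i := j, j := i, \<pi> j := k, k := \<pi> j, \<pi> k := \<pi> i, \<pi> i := \<pi> k))"

end

theory Submission
  imports Defs
begin

text \<open>For fixed \<open>i\<close>, the map \<open>(\<pi>, a, b) \<mapsto> (T\<^sub>i\<^sub>a\<^sub>b(\<pi>), \<pi>(i), b)\<close>, taken to be the identity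
  on degenerate triples, is an involution of \<open>M\<^sub>N \<times> ({1..N} - {i}) \<times> ({1..N} - {i})\<close>: the
  switch \<open>T\<^bsub>i \<pi>(i) b\<^esub>\<close> undoes \<open>T\<^sub>i\<^sub>a\<^sub>b\<close>. A bijection preserves the uniform distribution,
  and projecting to the first component shows that \<open>T\<^sub>i\<^sub>a\<^sub>b(\<pi>)\<close> is uniform.\<close>

lemma pmf_of_set_Times:
  assumes "finite A" "A \<noteq> {}" "finite B" "B \<noteq> {}"
  shows "pmf_of_set (A \<times> B) = pair_pmf (pmf_of_set A) (pmf_of_set B)"
proof (rule pmf_eqI)
  fix x :: "'a \<times> 'b"
  show "pmf (pmf_of_set (A \<times> B)) x = pmf (pair_pmf (pmf_of_set A) (pmf_of_set B)) x"
    using assms by (cases x) (simp add: pmf_pair card_cartesian_product indicator_def)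
qed

lemma map_fst_pmf_of_set_Times:
  assumes "finite A" "A \<noteq> {}" "finite B" "B \<noteq> {}"
  shows "map_pmf fst (pmf_of_set (A \<times> B)) = pmf_of_set A"
  using assms by (simp add: pmf_of_set_Times map_fst_pair_pmf)

lemma map_pmf_of_set_involution:
  assumes "finite A" "A \<noteq> {}" "f ` A \<subseteq> A" "\<And>x. x \<in> A \<Longrightarrow> f (f x) = x"
  shows "map_pmf f (pmf_of_set A) = pmf_of_set A"
  by (intro map_pmf_of_set_bij_betw bij_betw_byWitness[where f' = f]) (use assms in auto)

lemma card_six_eq_6_iff_distinct: "card {a, b, c, d, e, f} = 6 \<longleftrightarrow> distinct [a, b, c, d, e, f]"
proof -
  have "{a, b, c, d, e, f} = set [a, b, c, d, e, f]" and "length [a, b, c, d, e, f] = 6" by simp_all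
  then show ?thesis using distinct_card card_distinct by metis
qed

lemma card_six_le_6: "card {a, b, c, d, e, f} \<le> 6"
proof -
  have "{a, b, c, d, e, f} = set [a, b, c, d, e, f]" and "length [a, b, c, d, e, f] = 6" by simp_all
  then show ?thesis using card_length by metis
qed

lemma switch_eq_if_distinct:
  "switch i j k \<pi> =
     (if distinct [i, j, k, \<pi> i, \<pi> j, \<pi> k]
      then \<pi>(i := j, j := i, \<pi> j := k, k := \<pi> j, \<pi> k := \<pi> i, \<pi> i := \<pi> k) else \<pi>)"
proof -
  have "card {i, j, k, \<pi> i, \<pi> j, \<pi> k} < 6 \<longleftrightarrow> \<not> distinct [i, j, k, \<pi> i, \<pi> j, \<pi> k]"
    using card_six_eq_6_iff_distinct card_six_le_6 by (metis nat_less_le)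
  then show ?thesis unfolding switch_def by presburger
qed

lemma switch_degenerate: "\<not> distinct [i, j, k, \<pi> i, \<pi> j, \<pi> k] \<Longrightarrow> switch i j k \<pi> = \<pi>"
  unfolding switch_eq_if_distinct by (simp only: if_False)

lemma perfect_matchings_iff:
  "\<pi> \<in> perfect_matchings N \<longleftrightarrow>
     (\<forall>x. \<pi> (\<pi> x) = x) \<and> (\<forall>x. x \<notin> {1..N} \<longrightarrow> \<pi> x = x) \<and> (\<forall>x\<in>{1..N}. \<pi> x \<noteq> x)"
proof
  assume "\<pi> \<in> perfect_matchings N"
  then have "\<pi> permutes {1..N}" and "\<forall>x\<in>{1..N}. \<pi> (\<pi> x) = x \<and> \<pi> x \<noteq> x"
    unfolding perfect_matchings_def by auto
  then show "(\<forall>x. \<pi> (\<pi> x) = x) \<and> (\<forall>x. x \<notin> {1..N} \<longrightarrow> \<pi> x = x) \<and> (\<forall>x\<in>{1..N}. \<pi> x \<noteq> x)"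
    by (metis permutes_not_in)
next
  assume H: "(\<forall>x. \<pi> (\<pi> x) = x) \<and> (\<forall>x. x \<notin> {1..N} \<longrightarrow> \<pi> x = x) \<and> (\<forall>x\<in>{1..N}. \<pi> x \<noteq> x)"
  then have "\<pi> permutes {1..N}"
    unfolding permutes_def by metis
  with H show "\<pi> \<in> perfect_matchings N"
    unfolding perfect_matchings_def by blast
qed

lemma finite_perfect_matchings: "finite (perfect_matchings N)"
  by (rule finite_subset[OF _ finite_permutations[of "{1..N}"]])
     (auto simp: perfect_matchings_def)

lemma perfect_matchings_nonempty:
  assumes "even N"
  shows "perfect_matchings N \<noteq> {}"
proof -
  define m where "m x = (if x \<in> {1..N} then if odd x then x + 1 else x - 1 else x)" for x :: nat
  have range: "m x \<in> {1..N}" if "x \<in> {1..N}" for x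
    using assms that unfolding m_def by (auto elim!: oddE evenE) presburger
  have "m (m x) = x" for x
    using range[of x] unfolding m_def by (auto elim!: oddE evenE)
  moreover have "m x \<noteq> x" if "x \<in> {1..N}" for x
    using that unfolding m_def by (auto elim!: oddE evenE)
  ultimately have "m \<in> perfect_matchings N"
    unfolding perfect_matchings_iff m_def by auto
  then show ?thesis by blast
qed

lemma switch_apply:
  assumes "distinct [i, j, k, \<pi> i, \<pi> j, \<pi> k]"
  shows "switch i j k \<pi> i = j" "switch i j k \<pi> j = i"
    "switch i j k \<pi> (\<pi> j) = k" "switch i j k \<pi> k = \<pi> j"
    "switch i j k \<pi> (\<pi> k) = \<pi> i" "switch i j k \<pi> (\<pi> i) = \<pi> k"
    "x \<notin> {i, j, k, \<pi> i, \<pi> j, \<pi> k} \<Longrightarrow> switch i j k \<pi> x = \<pi> x"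
proof -
  have "i \<noteq> j" "i \<noteq> k" "i \<noteq> \<pi> i" "i \<noteq> \<pi> j" "i \<noteq> \<pi> k" "j \<noteq> k" "j \<noteq> \<pi> i" "j \<noteq> \<pi> j"
    "j \<noteq> \<pi> k" "k \<noteq> \<pi> i" "k \<noteq> \<pi> j" "k \<noteq> \<pi> k" "\<pi> i \<noteq> \<pi> j" "\<pi> i \<noteq> \<pi> k" "\<pi> j \<noteq> \<pi> k"
    using assms by auto
  note neq = this this[symmetric]
  have "switch i j k \<pi> = \<pi>(i := j, j := i, \<pi> j := k, k := \<pi> j, \<pi> k := \<pi> i, \<pi> i := \<pi> k)"
    using assms unfolding switch_eq_if_distinct by (simp only: if_True)
  then show "switch i j k \<pi> i = j" "switch i j k \<pi> j = i"
    "switch i j k \<pi> (\<pi> j) = k" "switch i j k \<pi> k = \<pi> j"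
    "switch i j k \<pi> (\<pi> k) = \<pi> i" "switch i j k \<pi> (\<pi> i) = \<pi> k"
    "x \<notin> {i, j, k, \<pi> i, \<pi> j, \<pi> k} \<Longrightarrow> switch i j k \<pi> x = \<pi> x"
    by (simp_all add: neq)
qed

lemma switch_in_perfect_matchings:
  assumes "\<pi> \<in> perfect_matchings N"
  shows "switch i j k \<pi> \<in> perfect_matchings N"
proof (cases "distinct [i, j, k, \<pi> i, \<pi> j, \<pi> k]")
  case True
  define P where "P = {i, j, k, \<pi> i, \<pi> j, \<pi> k}"
  define \<sigma> where "\<sigma> = switch i j k \<pi>"
  have inv: "\<pi> (\<pi> x) = x" and fix_out: "x \<notin> {1..N} \<Longrightarrow> \<pi> x = x"
    and fpf: "x \<in> {1..N} \<Longrightarrow> \<pi> x \<noteq> x" for x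
    using assms unfolding perfect_matchings_iff by auto
  note \<sigma>_apply = switch_apply[OF True, folded \<sigma>_def P_def]
  have \<sigma>_P: "\<sigma> x \<in> P \<and> \<sigma> (\<sigma> x) = x \<and> \<sigma> x \<noteq> x" if "x \<in> P" for x
    using that True unfolding P_def by (auto simp: \<sigma>_apply)
  have \<pi>_not_P: "\<pi> x \<notin> P" if "x \<notin> P" for x
    using that inv[of x] inv[of i] inv[of j] inv[of k] unfolding P_def by auto
  have "\<pi> x \<noteq> x" if "x \<in> P" for x
    using that True inv[of i] inv[of j] inv[of k] unfolding P_def by auto
  then have "P \<subseteq> {1..N}"
    using fix_out by blast
  then have "(\<forall>x. \<sigma> (\<sigma> x) = x) \<and> (\<forall>x. x \<notin> {1..N} \<longrightarrow> \<sigma> x = x) \<and> (\<forall>x\<in>{1..N}. \<sigma> x \<noteq> x)"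
    using \<sigma>_P \<pi>_not_P \<sigma>_apply(7) inv fix_out fpf by (metis subsetD)
  then show ?thesis
    unfolding \<sigma>_def perfect_matchings_iff .
next
  case False
  with assms show ?thesis by (simp only: switch_degenerate[OF False])
qed

lemma switch_undo:
  assumes inv: "\<And>x. \<pi> (\<pi> x) = x" and dist: "distinct [i, j, k, \<pi> i, \<pi> j, \<pi> k]"
  defines "\<sigma> \<equiv> switch i j k \<pi>"
  shows "distinct [i, \<pi> i, k, \<sigma> i, \<sigma> (\<pi> i), \<sigma> k]" and "switch i (\<pi> i) k \<sigma> = \<pi>"
proof -
  note \<sigma>_apply = switch_apply[OF dist, folded \<sigma>_def]
  show dist_back: "distinct [i, \<pi> i, k, \<sigma> i, \<sigma> (\<pi> i), \<sigma> k]"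
    using dist by (auto simp: \<sigma>_apply)
  note \<sigma>_undo_apply = switch_apply[OF dist_back]
  show "switch i (\<pi> i) k \<sigma> = \<pi>"
  proof
    fix x
    show "switch i (\<pi> i) k \<sigma> x = \<pi> x"
    proof (cases "x \<in> {i, j, k, \<pi> i, \<pi> j, \<pi> k}")
      case True
      then show ?thesis using \<sigma>_undo_apply inv by (auto simp: \<sigma>_apply)
    next
      case False
      then show ?thesis using \<sigma>_undo_apply(7) \<sigma>_apply by auto
    qed
  qed
qed

definition switch_triple :: "nat \<Rightarrow> (nat \<Rightarrow> nat) \<times> nat \<times> nat \<Rightarrow> (nat \<Rightarrow> nat) \<times> nat \<times> nat" where
  "switch_triple i = (\<lambda>(\<pi>, j, k).
     if distinct [i, j, k, \<pi> i, \<pi> j, \<pi> k] then (switch i j k \<pi>, \<pi> i, k) else (\<pi>, j, k))"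

lemma fst_switch_triple: "fst (switch_triple i (\<pi>, j, k)) = switch i j k \<pi>"
  unfolding switch_triple_def using switch_degenerate[of i j k \<pi>] by simp

lemma switch_triple_switch_triple:
  assumes "\<And>x. \<pi> (\<pi> x) = x"
  shows "switch_triple i (switch_triple i (\<pi>, j, k)) = (\<pi>, j, k)"
proof (cases "distinct [i, j, k, \<pi> i, \<pi> j, \<pi> k]")
  case True
  with switch_undo[OF assms True] show ?thesis
    unfolding switch_triple_def by (simp add: switch_apply(1)[OF True])
next
  case False
  then show ?thesis by (simp only: switch_triple_def case_prod_conv if_not_P[OF False] if_False)
qed

lemma switch_triple_in_triples:
  assumes "t \<in> perfect_matchings N \<times> ({1..N} - {i}) \<times> ({1..N} - {i})"
  shows "switch_triple i t \<in> perfect_matchings N \<times> ({1..N} - {i}) \<times> ({1..N} - {i})"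
proof -
  obtain \<pi> j k where t: "t = (\<pi>, j, k)" by (metis prod.exhaust)
  with assms have \<pi>: "\<pi> \<in> perfect_matchings N" by simp
  then have "\<pi> i \<in> {1..N} - {i}" if "\<pi> i \<noteq> i"
    using that unfolding perfect_matchings_iff by (metis DiffI singletonD)
  with assms switch_in_perfect_matchings[OF \<pi>] show ?thesis
    unfolding t switch_triple_def by auto
qed

lemma map_pmf_switch_triple:
  fixes N i :: nat
  defines "T \<equiv> perfect_matchings N \<times> ({1..N} - {i}) \<times> ({1..N} - {i})"
  assumes "T \<noteq> {}"
  shows "map_pmf (switch_triple i) (pmf_of_set T) = pmf_of_set T"
proof (rule map_pmf_of_set_involution)
  show "finite T"
    unfolding T_def using finite_perfect_matchings by blast
  show "switch_triple i ` T \<subseteq> T"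
    unfolding T_def using switch_triple_in_triples by blast
  show "switch_triple i (switch_triple i t) = t" if t: "t \<in> T" for t
  proof -
    obtain \<pi> j k where "t = (\<pi>, j, k)" "\<pi> \<in> perfect_matchings N"
      using t unfolding T_def by (cases t) auto
    then show ?thesis
      using switch_triple_switch_triple unfolding perfect_matchings_iff by blast
  qed
qed (fact assms)

theorem lemma3p4:
  fixes N i :: nat
  assumes "even N" and "i \<in> {1..N}"
  shows "map_pmf (\<lambda>(\<pi>, a, b). switch i a b \<pi>)
           (pmf_of_set (perfect_matchings N \<times> ({1..N} - {i}) \<times> ({1..N} - {i})))
         = pmf_of_set (perfect_matchings N)
     \<and> (\<forall>\<pi>\<in>perfect_matchings N. \<forall>a\<in>{1..N} - {i}. \<forall>b\<in>{1..N} - {i}.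
          card {i, a, b, \<pi> i, \<pi> a, \<pi> b} = 6 \<longrightarrow> switch i a b \<pi> i = a)"
proof
  define M where "M = perfect_matchings N"
  define X where "X = {1..N} - {i}"
  have M: "finite M" "M \<noteq> {}"
    unfolding M_def using finite_perfect_matchings perfect_matchings_nonempty[OF assms(1)] by auto
  have "N \<ge> 2" using assms by (auto elim!: evenE)
  then have "(if i = 1 then 2 else 1) \<in> X"
    unfolding X_def by auto
  then have X: "finite X" "X \<noteq> {}"
    unfolding X_def by auto
  have "(\<lambda>(\<pi>, a, b). switch i a b \<pi>) = fst \<circ> switch_triple i"
    by (auto simp: fun_eq_iff fst_switch_triple)
  then have "map_pmf (\<lambda>(\<pi>, a, b). switch i a b \<pi>) (pmf_of_set (M \<times> X \<times> X))
      = map_pmf fst (map_pmf (switch_triple i) (pmf_of_set (M \<times> X \<times> X)))"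
    by (simp add: pmf.map_comp)
  also have "\<dots> = map_pmf fst (pmf_of_set (M \<times> X \<times> X))"
    using M X unfolding M_def X_def by (subst map_pmf_switch_triple) auto
  also have "\<dots> = pmf_of_set M"
    using M X by (simp add: map_fst_pmf_of_set_Times)
  finally show "map_pmf (\<lambda>(\<pi>, a, b). switch i a b \<pi>) (pmf_of_set (M \<times> X \<times> X)) = pmf_of_set M" .
next
  show "\<forall>\<pi>\<in>perfect_matchings N. \<forall>a\<in>{1..N} - {i}. \<forall>b\<in>{1..N} - {i}.
          card {i, a, b, \<pi> i, \<pi> a, \<pi> b} = 6 \<longrightarrow> switch i a b \<pi> i = a"
    using card_six_eq_6_iff_distinct switch_apply(1) by metis
qed

end
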